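(* Consider the Bellman problem: find $v\in\mathbb{R}^M$ with $\sup_{P\in\mathcal{P}}\{-A(P)v+b(P)\}=0$. Assume (H0), that $A$ and $b$ are bounded on $\mathcal{P}$, and that $A(P)$ is a monotone matrix for every $P\in\mathcal{P}$. Then for any $v^0\in\mathbb{R}^M$ and any positive summable sequence $(\epsilon^\ell)$, the sequence $(v^\ell)_{\ell\ge1}$ produced by $\epsilon$-policy iteration converges to $v$, the unique solution of the Bellman problem (in particular a solution exists).
   Context: $\mathcal{P}=\prod_{i=1}^M\mathcal{P}_i$ is a product of nonempty sets; $A:\mathcal{P}\to\mathbb{R}^{M\times M}$ and $b:\mathcal{P}\to\mathbb{R}^M$ are row-decoupled: row $i$ of $A(P)$ and $[b(P)]_i$ depend only on $P_i$. Order on $\mathbb{R}^M$ and suprema are componentwise. A real square matrix $A$ is monotone if $Av\ge0$ implies $v\ge0$. (H0): $P\mapsto A(P)^{-1}$ is bounded on $\{P\in\mathcal{P}: A(P)\text{ nonsingular}\}$. For $x\in\mathbb{R}^M$ and $c\in\mathbb{R}$, $x+c$ adds $c$ to each component. $\epsilon$-policy iteration: pick a sequence $\epsilon^\ell>0$ with $\sum_{\ell\ge1}\epsilon^\ell<\infty$; for $\ell=1,2,\dots$ choose $P^\ell\in\mathcal{P}$ with $-A(P^\ell)v^{\ell-1}+b(P^\ell)+\epsilon^\ell\ge\sup_{P\in\mathcal{P}}\{-A(P)v^{\ell-1}+b(P)\}$, and let $v^\ell$ be the exact solution of $A(P^\ell)v^\ell=b(P^\ell)$. *)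

theory Defs
  imports "HOL-Analysis.Analysis"
begin

text \<open>Index set {1..M} is the finite type 'm; a policy P is a function 'm => 'c
  with P i in Ps i, i.e. an element of the product set Pi UNIV Ps.\<close>

definition monotone_matrix :: "real^'m^'m \<Rightarrow> bool" where
  "monotone_matrix A \<longleftrightarrow> (\<forall>v. (\<forall>i. 0 \<le> (A *v v) $ i) \<longrightarrow> (\<forall>i. 0 \<le> v $ i))"

definition row_decoupled ::
  "('m::finite \<Rightarrow> 'c set) \<Rightarrow> (('m \<Rightarrow> 'c) \<Rightarrow> real^'m^'m) \<Rightarrow> (('m \<Rightarrow> 'c) \<Rightarrow> real^'m) \<Rightarrow> bool" where
  "row_decoupled Ps A b \<longleftrightarrow>
     (\<forall>P\<in>Pi UNIV Ps. \<forall>Q\<in>Pi UNIV Ps. \<forall>i. P i = Q i \<longrightarrow> A P $ i = A Q $ i \<and> b P $ i = b Q $ i)"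

definition bellman_sup ::
  "('m::finite \<Rightarrow> 'c set) \<Rightarrow> (('m \<Rightarrow> 'c) \<Rightarrow> real^'m^'m) \<Rightarrow> (('m \<Rightarrow> 'c) \<Rightarrow> real^'m) \<Rightarrow> real^'m \<Rightarrow> real^'m" where
  "bellman_sup Ps A b v = (\<chi> i. SUP P\<in>Pi UNIV Ps. (b P - A P *v v) $ i)"

end

theory Submission
  imports Defs
begin

text \<open>Every policy matrix is monotone, hence invertible, and by (H0) its inverse is uniformly
  bounded; so \<open>A(P) x \<ge> -c\<close> forces \<open>x \<ge> -c K\<close> with \<open>K\<close> independent of \<open>P\<close>.
  Row-decoupling lets one assemble, row by row, a single policy that nearly attains the
  componentwise supremum; together with monotonicity this gives a comparison principle
  (subsolution \<open>\<le>\<close> supersolution) and hence uniqueness. Each iterate \<open>v\<^sub>l\<close>, \<open>l \<ge> 1\<close>, is a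
  subsolution, so \<open>A(P\<^sub>l\<^sub>+\<^sub>1)(v\<^sub>l\<^sub>+\<^sub>1 - v\<^sub>l) \<ge> -\<epsilon>\<^sub>l\<^sub>+\<^sub>1\<close>: the iterates increase up to
  the summable errors \<open>K \<epsilon>\<^sub>l\<^sub>+\<^sub>1\<close>. Being bounded they converge, and the Bellman residual of
  the limit is squeezed between \<open>0\<close> and \<open>\<epsilon>\<^sub>l\<^sub>+\<^sub>1 + O(|v\<^sub>l\<^sub>+\<^sub>1 - v\<^sub>l|)\<close>.\<close>

lemma abs_matrix_vector_nth_le:
  fixes M :: "real^'n^'m"
  assumes "norm M \<le> K"
  shows "\<bar>(M *v x) $ i\<bar> \<le> K * norm x"
proof -
  have "\<bar>(M *v x) $ i\<bar> \<le> norm (M $ i) * norm x"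
    by (simp add: matrix_mult_dot Cauchy_Schwarz_ineq2)
  also have "\<dots> \<le> K * norm x"
    using Finite_Cartesian_Product.norm_nth_le[of M i] assms
    by (intro mult_right_mono) auto
  finally show ?thesis .
qed

lemma matrix_inv_right:
  fixes A :: "'a::field^'n^'n"
  assumes "invertible A"
  shows "A ** matrix_inv A = mat 1"
proof -
  have "\<exists>A'. A ** A' = mat 1 \<and> A' ** A = mat 1"
    using assms unfolding invertible_def by blast
  then have "A ** matrix_inv A = mat 1 \<and> matrix_inv A ** A = mat 1"
    unfolding matrix_inv_def by (rule someI_ex)
  then show ?thesis ..
qed

lemma matrix_inv_left:
  fixes A :: "'a::field^'n^'n"
  assumes "invertible A"
  shows "matrix_inv A ** A = mat 1"
  using matrix_inv_right[OF assms] matrix_left_right_inverse by blast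

lemma monotone_matrix_invertible:
  fixes A :: "real^'m^'m"
  assumes "monotone_matrix A"
  shows "invertible A"
proof -
  have "x = 0" if "A *v x = 0" for x
  proof -
    have "A *v (- x) = 0"
      using that by (simp add: vec_eq_iff matrix_vector_mult_def sum_negf)
    have "0 \<le> x $ i" for i
      using assms \<open>A *v x = 0\<close> unfolding monotone_matrix_def by simp
    moreover have "0 \<le> (- x) $ i" for i
      using assms \<open>A *v (- x) = 0\<close> unfolding monotone_matrix_def by (metis zero_index order_refl)
    ultimately show ?thesis
      by (auto simp: vec_eq_iff intro: antisym)
  qed
  then show ?thesis
    using invertible_left_inverse matrix_left_invertible_ker by blast
qed

lemma monotone_matrix_lower_bound:
  fixes A :: "real^'m^'m"
  assumes mono: "monotone_matrix A" and "0 \<le> c" and residual: "\<And>i. - c \<le> (A *v x) $ i"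
  shows "- c * (matrix_inv A *v (\<chi> i. 1)) $ j \<le> x $ j"
proof -
  define y where "y = x + c *s (matrix_inv A *v (\<chi> i. 1))"
  have "A *v y = A *v x + c *s ((A ** matrix_inv A) *v (\<chi> i. 1))"
    unfolding y_def
    by (simp add: matrix_vector_right_distrib matrix_vector_mul_assoc vector_scalar_commute)
  also have "\<dots> = A *v x + c *s (\<chi> i. 1)"
    using matrix_inv_right[OF monotone_matrix_invertible[OF mono]] by simp
  finally have "0 \<le> (A *v y) $ i" for i
    using residual[of i] by simp
  then have "0 \<le> y $ j"
    using mono unfolding monotone_matrix_def by blast
  then show ?thesis
    unfolding y_def by simp
qed

lemma convergent_if_almost_increasing:
  fixes a d :: "nat \<Rightarrow> real"
  assumes step: "\<And>l. a l - d l \<le> a (Suc l)" and d_nonneg: "\<And>l. 0 \<le> d l"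
    and d_summable: "summable d" and bounded: "\<And>l. a l \<le> C"
  shows "convergent a"
proof -
  define g where "g l = a l + (\<Sum>k<l. d k)" for l
  have "incseq g"
    unfolding incseq_Suc_iff g_def using step by (simp add: algebra_simps)
  moreover have "g l \<le> C + suminf d" for l
    unfolding g_def using bounded[of l] sum_le_suminf[OF d_summable, of "{..<l}"] d_nonneg
    by force
  ultimately obtain L where "g \<longlonglongrightarrow> L"
    using incseq_convergent by blast
  then have "(\<lambda>l. g l - (\<Sum>k<l. d k)) \<longlonglongrightarrow> L - suminf d"
    by (intro tendsto_diff summable_LIMSEQ d_summable)
  then show ?thesis
    unfolding g_def convergent_def by auto
qed

lemma row_decoupled_diagonal_policy:
  assumes decoupled: "row_decoupled Ps A b" and R: "\<And>i. R i \<in> Pi UNIV Ps"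
  shows "(\<lambda>j. R j j) \<in> Pi UNIV Ps"
    and "A (\<lambda>j. R j j) $ i = A (R i) $ i" and "b (\<lambda>j. R j j) $ i = b (R i) $ i"
proof -
  show Q: "(\<lambda>j. R j j) \<in> Pi UNIV Ps"
    using R by auto
  show "A (\<lambda>j. R j j) $ i = A (R i) $ i" "b (\<lambda>j. R j j) $ i = b (R i) $ i"
    using decoupled[unfolded row_decoupled_def, rule_format, OF Q R[of i]] by simp_all
qed

locale bellman_problem =
  fixes Ps :: "'m::finite \<Rightarrow> 'c set"
    and A :: "('m \<Rightarrow> 'c) \<Rightarrow> real^'m^'m"
    and b :: "('m \<Rightarrow> 'c) \<Rightarrow> real^'m"
  assumes nonempty: "\<And>i. Ps i \<noteq> {}"
    and decoupled: "row_decoupled Ps A b"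
    and H0: "bounded ((\<lambda>P. matrix_inv (A P)) ` {P \<in> Pi UNIV Ps. invertible (A P)})"
    and A_bdd: "bounded (A ` Pi UNIV Ps)"
    and b_bdd: "bounded (b ` Pi UNIV Ps)"
    and A_mono: "\<And>P. P \<in> Pi UNIV Ps \<Longrightarrow> monotone_matrix (A P)"
begin

abbreviation policies :: "('m \<Rightarrow> 'c) set" where
  "policies \<equiv> Pi UNIV Ps"

abbreviation bellman :: "real^'m \<Rightarrow> real^'m" where
  "bellman \<equiv> bellman_sup Ps A b"

lemma policies_nonempty: "policies \<noteq> {}"
  using nonempty by simp

lemma policy_value_bdd_above: "bdd_above ((\<lambda>P. (b P - A P *v w) $ i) ` policies)"
proof -
  obtain KA where KA: "\<And>P. P \<in> policies \<Longrightarrow> norm (A P) \<le> KA"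
    using A_bdd unfolding bounded_iff by auto
  obtain KB where KB: "\<And>P. P \<in> policies \<Longrightarrow> norm (b P) \<le> KB"
    using b_bdd unfolding bounded_iff by auto
  show ?thesis
  proof (rule bdd_aboveI2)
    fix P assume P: "P \<in> policies"
    have "b P $ i \<le> KB"
      using KB[OF P] component_le_norm_cart[of "b P" i] by linarith
    moreover have "- (A P *v w) $ i \<le> KA * norm w"
      using abs_matrix_vector_nth_le[OF KA[OF P], of w i] by linarith
    ultimately show "(b P - A P *v w) $ i \<le> KB + KA * norm w"
      by simp
  qed
qed

lemma bellman_nth: "bellman w $ i = (SUP P\<in>policies. (b P - A P *v w) $ i)"
  by (simp only: bellman_sup_def vec_lambda_beta)

lemma policy_value_le_bellman:
  assumes "P \<in> policies"
  shows "(b P - A P *v w) $ i \<le> bellman w $ i"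
  unfolding bellman_nth by (rule cSUP_upper[OF assms policy_value_bdd_above])

lemma isCont_bellman: "isCont (\<lambda>w. bellman w $ i) w"
proof -
  obtain KA where KA: "0 < KA" "\<And>P. P \<in> policies \<Longrightarrow> norm (A P) \<le> KA"
    using A_bdd unfolding bounded_pos by auto
  have one_sided: "bellman w $ i \<le> bellman w' $ i + KA * norm (w - w')" for w w'
    unfolding bellman_nth[of w]
  proof (rule cSUP_least[OF policies_nonempty])
    fix P assume P: "P \<in> policies"
    have "(b P - A P *v w) $ i = (b P - A P *v w') $ i - (A P *v (w - w')) $ i"
      by (simp add: matrix_vector_mult_diff_distrib)
    also have "\<dots> \<le> bellman w' $ i + KA * norm (w - w')"
      using policy_value_le_bellman[OF P, of w' i] abs_matrix_vector_nth_le[OF KA(2)[OF P], of "w - w'" i]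
      by linarith
    finally show "(b P - A P *v w) $ i \<le> bellman w' $ i + KA * norm (w - w')" .
  qed
  have "KA-lipschitz_on UNIV (\<lambda>w. bellman w $ i)"
  proof (rule lipschitz_onI[OF _ less_imp_le[OF KA(1)]])
    fix w w' :: "real^'m"
    show "dist (bellman w $ i) (bellman w' $ i) \<le> KA * dist w w'"
      using one_sided[of w w'] one_sided[of w' w]
      by (simp add: dist_real_def dist_norm norm_minus_commute abs_le_iff)
  qed
  then show ?thesis
    using lipschitz_on_continuous_on continuous_on_eq_continuous_at by blast
qed

lemma policy_matrix_invertible: "P \<in> policies \<Longrightarrow> invertible (A P)"
  using A_mono monotone_matrix_invertible by blast

lemma policy_inverse_bounded:
  obtains KI where "0 < KI" and "\<And>P. P \<in> policies \<Longrightarrow> norm (matrix_inv (A P)) \<le> KI"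
  using H0 policy_matrix_invertible unfolding bounded_pos by force

lemma policy_matrix_lower_bound:
  obtains K :: real where "0 < K"
    and "\<And>P x c j. P \<in> policies \<Longrightarrow> 0 \<le> c \<Longrightarrow> (\<And>i. - c \<le> (A P *v x) $ i) \<Longrightarrow> - c * K \<le> x $ j"
proof -
  obtain KI where KI: "0 < KI" "\<And>P. P \<in> policies \<Longrightarrow> norm (matrix_inv (A P)) \<le> KI"
    using policy_inverse_bounded by blast
  define one :: "real^'m" where "one = (\<chi> i. 1)"
  have "one \<noteq> 0"
    unfolding one_def by (simp add: vec_eq_iff)
  then have "0 < KI * norm one"
    using KI(1) by simp
  moreover have "- c * (KI * norm one) \<le> x $ j"
    if P: "P \<in> policies" and c: "0 \<le> c" and residual: "\<And>i. - c \<le> (A P *v x) $ i" for P x c j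
  proof -
    have "(matrix_inv (A P) *v one) $ j \<le> KI * norm one"
      using abs_matrix_vector_nth_le[OF KI(2)[OF P], of one j] by linarith
    then have "- c * (KI * norm one) \<le> - c * (matrix_inv (A P) *v one) $ j"
      using c by (simp add: mult_left_mono)
    also have "\<dots> \<le> x $ j"
      unfolding one_def using monotone_matrix_lower_bound[OF A_mono[OF P] c residual] .
    finally show ?thesis .
  qed
  ultimately show ?thesis using that by blast
qed

lemma bellman_comparison:
  assumes super: "\<And>i. bellman w' $ i \<le> 0" and sub: "\<And>i. 0 \<le> bellman w $ i"
  shows "w $ j \<le> w' $ j"
proof (rule field_le_epsilon)
  fix e :: real assume "0 < e"
  obtain K where K: "0 < K"
    "\<And>P x c j. P \<in> policies \<Longrightarrow> 0 \<le> c \<Longrightarrow> (\<And>i. - c \<le> (A P *v x) $ i) \<Longrightarrow> - c * K \<le> x $ j"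
    using policy_matrix_lower_bound by blast
  define \<delta> where "\<delta> = e / K"
  have "0 < \<delta>"
    unfolding \<delta>_def using \<open>0 < e\<close> K(1) by simp
  have "\<exists>P\<in>policies. - \<delta> < (b P - A P *v w) $ i" for i
  proof -
    have "- \<delta> < bellman w $ i"
      using sub[of i] \<open>0 < \<delta>\<close> by linarith
    then show ?thesis
      unfolding bellman_nth
      using less_cSUP_iff[OF policies_nonempty policy_value_bdd_above] by blast
  qed
  then obtain R where R: "\<And>i. R i \<in> policies" "\<And>i. - \<delta> < (b (R i) - A (R i) *v w) $ i"
    by metis
  define Q where "Q = (\<lambda>j. R j j)"
  have Q: "Q \<in> policies" "\<And>i. A Q $ i = A (R i) $ i" "\<And>i. b Q $ i = b (R i) $ i"
    unfolding Q_def using row_decoupled_diagonal_policy[of Ps A b R, OF decoupled R(1)] by blast+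
  have "- \<delta> \<le> (A Q *v (w' - w)) $ i" for i
  proof -
    have "(b Q - A Q *v w') $ i \<le> 0"
      using policy_value_le_bellman[OF Q(1), of w' i] super[of i] by simp
    moreover have "- \<delta> < (b Q - A Q *v w) $ i"
      using R(2)[of i] Q(2,3)[of i] by (simp add: matrix_vector_mul_component)
    ultimately show ?thesis
      by (simp add: matrix_vector_mult_diff_distrib)
  qed
  then have "- \<delta> * K \<le> (w' - w) $ j"
    by (rule K(2)[OF Q(1) less_imp_le[OF \<open>0 < \<delta>\<close>]])
  moreover have "\<delta> * K = e"
    unfolding \<delta>_def using K(1) by simp
  ultimately show "w $ j \<le> w' $ j + e"
    by simp
qed

lemma bellman_solution_unique:
  assumes "bellman w = 0" and "bellman w' = 0"
  shows "w = w'"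
  using bellman_comparison[of w' w] bellman_comparison[of w w'] assms
  by (auto simp: vec_eq_iff intro: antisym)

end

locale eps_policy_iteration = bellman_problem Ps A b
  for Ps :: "'m::finite \<Rightarrow> 'c set"
    and A :: "('m \<Rightarrow> 'c) \<Rightarrow> real^'m^'m"
    and b :: "('m \<Rightarrow> 'c) \<Rightarrow> real^'m" +
  fixes eps :: "nat \<Rightarrow> real"
    and Pol :: "nat \<Rightarrow> ('m \<Rightarrow> 'c)"
    and v :: "nat \<Rightarrow> real^'m"
  assumes eps_pos: "\<And>l. eps (Suc l) > 0"
    and eps_summable: "summable (\<lambda>l. eps (Suc l))"
    and Pol_in: "\<And>l. Pol (Suc l) \<in> Pi UNIV Ps"
    and Pol_eps: "\<And>l i. (b (Pol (Suc l)) - A (Pol (Suc l)) *v v l) $ i + eps (Suc l)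
                           \<ge> bellman_sup Ps A b (v l) $ i"
    and v_solve: "\<And>l. A (Pol (Suc l)) *v v (Suc l) = b (Pol (Suc l))"
begin

lemma iterate_subsolution: "0 \<le> bellman (v (Suc l)) $ i"
  using policy_value_le_bellman[OF Pol_in[of l], of "v (Suc l)" i] v_solve[of l] by simp

lemma iterate_residual_le:
  "bellman (v (Suc l)) $ i \<le> (A (Pol (Suc (Suc l))) *v (v (Suc (Suc l)) - v (Suc l))) $ i
                               + eps (Suc (Suc l))"
  using Pol_eps[of "Suc l" i] v_solve[of "Suc l"] by (simp add: matrix_vector_mult_diff_distrib)

lemma iterate_almost_increasing:
  obtains K where "0 < K" and "\<And>l i. v (Suc l) $ i - K * eps (Suc (Suc l)) \<le> v (Suc (Suc l)) $ i"
proof -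
  obtain K where K: "0 < K"
    "\<And>P x c j. P \<in> policies \<Longrightarrow> 0 \<le> c \<Longrightarrow> (\<And>i. - c \<le> (A P *v x) $ i) \<Longrightarrow> - c * K \<le> x $ j"
    using policy_matrix_lower_bound by blast
  have "- eps (Suc (Suc l)) \<le> (A (Pol (Suc (Suc l))) *v (v (Suc (Suc l)) - v (Suc l))) $ j" for l j
    using iterate_residual_le[of l j] iterate_subsolution[of l j] by simp
  then have "- eps (Suc (Suc l)) * K \<le> (v (Suc (Suc l)) - v (Suc l)) $ i" for l i
    using K(2)[OF Pol_in] eps_pos less_imp_le by blast
  then show ?thesis
    using that K(1) by (simp add: algebra_simps)
qed

lemma iterate_bounded:
  obtains C where "\<And>l i. v (Suc l) $ i \<le> C"
proof -
  obtain KI where KI: "0 < KI" "\<And>P. P \<in> policies \<Longrightarrow> norm (matrix_inv (A P)) \<le> KI"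
    using policy_inverse_bounded by blast
  obtain KB where KB: "\<And>P. P \<in> policies \<Longrightarrow> norm (b P) \<le> KB"
    using b_bdd unfolding bounded_iff by blast
  have "v (Suc l) $ i \<le> KI * KB" for l i
  proof -
    let ?Q = "Pol (Suc l)"
    have "v (Suc l) = matrix_inv (A ?Q) *v b ?Q"
      using v_solve[of l] matrix_inv_left[OF policy_matrix_invertible[OF Pol_in]]
      by (metis matrix_vector_mul_assoc matrix_vector_mul_lid)
    then have "v (Suc l) $ i \<le> KI * norm (b ?Q)"
      using abs_matrix_vector_nth_le[OF KI(2)[OF Pol_in[of l]], of "b ?Q" i] by simp
    also have "\<dots> \<le> KI * KB"
      using KI(1) KB[OF Pol_in] by simp
    finally show ?thesis .
  qed
  then show ?thesis using that by blast
qed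

lemma iterate_convergent: "\<exists>u. v \<longlonglongrightarrow> u"
proof -
  obtain K where "0 < K" and step: "\<And>l i. v (Suc l) $ i - K * eps (Suc (Suc l)) \<le> v (Suc (Suc l)) $ i"
    using iterate_almost_increasing by blast
  obtain C where bounded: "\<And>l i. v (Suc l) $ i \<le> C"
    using iterate_bounded by blast
  have "summable (\<lambda>l. K * eps (Suc (Suc l)))"
    using eps_summable by (simp add: summable_mult summable_Suc_iff[of "\<lambda>l. eps (Suc l)"])
  then have "convergent (\<lambda>l. v (Suc l) $ i)" for i
    using convergent_if_almost_increasing[of "\<lambda>l. v (Suc l) $ i" "\<lambda>l. K * eps (Suc (Suc l))" C]
      step bounded \<open>0 < K\<close> eps_pos by (simp add: less_imp_le)
  then obtain L where "\<And>i. (\<lambda>l. v (Suc l) $ i) \<longlonglongrightarrow> L i"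
    unfolding convergent_def by metis
  then have "(\<lambda>l. v (Suc l)) \<longlonglongrightarrow> (\<chi> i. L i)"
    by (intro vec_tendstoI) simp
  then show ?thesis
    using filterlim_sequentially_Suc by blast
qed

lemma bellman_at_limit:
  assumes "v \<longlonglongrightarrow> u"
  shows "bellman u = 0"
proof -
  obtain KA where KA: "\<And>P. P \<in> policies \<Longrightarrow> norm (A P) \<le> KA"
    using A_bdd unfolding bounded_iff by blast
  have vSuc: "(\<lambda>l. v (Suc l)) \<longlonglongrightarrow> u"
    using assms by (simp add: filterlim_sequentially_Suc)
  then have vSucSuc: "(\<lambda>l. v (Suc (Suc l))) \<longlonglongrightarrow> u"
    using filterlim_sequentially_Suc[of "\<lambda>l. v (Suc l)"] by simp
  have "bellman u $ i = 0" for i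
  proof -
    have lim: "(\<lambda>l. bellman (v (Suc l)) $ i) \<longlonglongrightarrow> bellman u $ i"
      using isCont_tendsto_compose[OF isCont_bellman vSuc] .
    have "(\<lambda>l. v (Suc (Suc l)) - v (Suc l)) \<longlonglongrightarrow> u - u"
      by (intro tendsto_diff vSucSuc vSuc)
    then have "(\<lambda>l. KA * norm (v (Suc (Suc l)) - v (Suc l)) + eps (Suc (Suc l))) \<longlonglongrightarrow> KA * 0 + 0"
      using summable_LIMSEQ_zero[of "\<lambda>l. eps (Suc (Suc l))"] eps_summable
      by (intro tendsto_add tendsto_mult tendsto_const tendsto_norm_zero)
         (simp_all add: summable_Suc_iff[of "\<lambda>l. eps (Suc l)"])
    moreover have "bellman (v (Suc l)) $ i \<le> KA * norm (v (Suc (Suc l)) - v (Suc l)) + eps (Suc (Suc l))"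
      for l
      using iterate_residual_le[of l i]
        abs_matrix_vector_nth_le[OF KA[OF Pol_in[of "Suc l"]], of "v (Suc (Suc l)) - v (Suc l)" i]
      by linarith
    ultimately have "bellman u $ i \<le> 0"
      using tendsto_le[OF trivial_limit_sequentially _ lim] by simp
    moreover have "0 \<le> bellman u $ i"
      using tendsto_le[OF trivial_limit_sequentially lim tendsto_const] iterate_subsolution by simp
    ultimately show ?thesis by simp
  qed
  then show ?thesis
    by (simp add: vec_eq_iff)
qed

end

theorem theoremA3:
  fixes Ps :: "'m::finite \<Rightarrow> 'c set"
    and A :: "('m \<Rightarrow> 'c) \<Rightarrow> real^'m^'m"
    and b :: "('m \<Rightarrow> 'c) \<Rightarrow> real^'m"
    and eps :: "nat \<Rightarrow> real"
    and Pol :: "nat \<Rightarrow> ('m \<Rightarrow> 'c)"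
    and v :: "nat \<Rightarrow> real^'m"
  assumes nonempty: "\<And>i. Ps i \<noteq> {}"
    and decoupled: "row_decoupled Ps A b"
    and H0: "bounded ((\<lambda>P. matrix_inv (A P)) ` {P \<in> Pi UNIV Ps. invertible (A P)})"
    and A_bdd: "bounded (A ` Pi UNIV Ps)"
    and b_bdd: "bounded (b ` Pi UNIV Ps)"
    and A_mono: "\<And>P. P \<in> Pi UNIV Ps \<Longrightarrow> monotone_matrix (A P)"
    and eps_pos: "\<And>l. eps (Suc l) > 0"
    and eps_summable: "summable (\<lambda>l. eps (Suc l))"
    and Pol_in: "\<And>l. Pol (Suc l) \<in> Pi UNIV Ps"
    and Pol_eps: "\<And>l i. (b (Pol (Suc l)) - A (Pol (Suc l)) *v v l) $ i + eps (Suc l)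
                           \<ge> bellman_sup Ps A b (v l) $ i"
    and v_solve: "\<And>l. A (Pol (Suc l)) *v v (Suc l) = b (Pol (Suc l))"
  shows "\<exists>u. (\<forall>w. bellman_sup Ps A b w = 0 \<longleftrightarrow> w = u) \<and> v \<longlonglongrightarrow> u"
proof -
  interpret eps_policy_iteration Ps A b eps Pol v
    using assms by unfold_locales
  obtain u where "v \<longlonglongrightarrow> u"
    using iterate_convergent by blast
  moreover have "bellman u = 0"
    using bellman_at_limit[OF \<open>v \<longlonglongrightarrow> u\<close>] .
  ultimately show ?thesis
    using bellman_solution_unique by blast
qed

end
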